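(* Let $h>0$, $P>0$, $0<\zeta\le1$, $\sigma_A^2\ge0$, $\sigma_{\rm cov}^2>0$, $\sigma_{\rm rec}>0$, $P_{\rm s}^{\rm tgt}>0$, $0\le Q_{\rm req}\le\zeta hP$, and $P_S\ge P_I>0$. Let $\mathcal{Q}(x)=\frac1{\sqrt{2\pi}}\int_x^\infty e^{-t^2/2}\,dt$ and $\mathcal{M}=\{2^l: l\in\{1,2,\dots,10\}\}$. Consider (P1): maximize $R=(1-\alpha)\log_2 M$ over $\alpha\in[0,1]$, $\rho\in[0,1]$, $M\in\mathcal{M}$ subject to $$\frac{4(\sqrt M-1)}{\sqrt M}\,\mathcal{Q}\!\left(\sqrt{\frac{3}{M-1}\cdot\frac{(1-\rho)hP}{(1-\rho)\sigma_A^2+\sigma_{\rm cov}^2}}\right)\le P_{\rm s}^{\rm tgt},\qquad \alpha\zeta hP+(1-\alpha)\rho\zeta hP-(1-\alpha)P_S\ge Q_{\rm req};$$ (P2): maximize $R=(1-\alpha)\log_2 M$ over $\alpha\in[0,1]$, $M\in\mathcal{M}$ subject to $$\frac{2(M-1)}{M}\,\mathcal{Q}\!\left(\frac{1}{M-1}\cdot\frac{hP}{\sigma_{\rm rec}}\right)\le P_{\rm s}^{\rm tgt},\qquad \zeta hP-(1-\alpha)P_I\ge Q_{\rm req}.$$ Assume both problems are feasible, and let $(\alpha_1^*,\rho_1^*,M_1^* )$ be an optimal solution of (P1) with optimal value $R_1^*$ and $(\alpha_2^*,M_2^* )$ an optimal solution of (P2) with optimal value $R_2^*$. Then $\alpha_1^*\ge\alpha_2^*$.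 Moreover, if $M_1^*\le M_2^*$, then $R_1^*\le R_2^*$.
   Context: (P1) models a separated receiver (coherent $M$-QAM, on-off power splitting with decoder-off time fraction $\alpha$ and power splitting ratio $\rho$, decoding circuit power $P_S$); (P2) models an integrated receiver (pulse energy modulation, decoder-off fraction $\alpha$, decoding circuit power $P_I$). In both, $P_{\rm s}^{\rm tgt}$ is a symbol error rate target and $Q_{\rm req}$ a minimum net harvested energy; $\sigma_A^2$, $\sigma_{\rm cov}^2$ are antenna and conversion noise powers, $\sigma_{\rm rec}$ the rectifier noise standard deviation, $\zeta$ the harvesting efficiency, $hP$ the received power. *)

theory Defs
  imports "HOL-Analysis.Analysis"
begin

definition Qfun :: "real \<Rightarrow> real" where
  "Qfun x = integral {x..} (\<lambda>t. exp (- (t^2) / 2)) / sqrt (2 * pi)"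

definition Mset :: "nat set" where
  "Mset = {2 ^ l | l. l \<in> {1..10::nat}}"

definition rate :: "real \<Rightarrow> nat \<Rightarrow> real" where
  "rate \<alpha> M = (1 - \<alpha>) * log 2 (real M)"

text \<open>Feasible set of (P1): separated receiver.
  Parameters: h P zeta sA2 (sigma_A^2) scov2 (sigma_cov^2) Pt (target SER) Qreq PS.\<close>
definition feas1 :: "real \<Rightarrow> real \<Rightarrow> real \<Rightarrow> real \<Rightarrow> real \<Rightarrow> real \<Rightarrow> real \<Rightarrow> real
    \<Rightarrow> real \<Rightarrow> real \<Rightarrow> nat \<Rightarrow> bool" where
  "feas1 h P \<zeta> sA2 scov2 Pt Qreq PS \<alpha> \<rho> M \<longleftrightarrow>
     \<alpha> \<in> {0..1} \<and> \<rho> \<in> {0..1} \<and> M \<in> Mset \<and>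
     4 * (sqrt (real M) - 1) / sqrt (real M) *
       Qfun (sqrt (3 / (real M - 1) * ((1 - \<rho>) * h * P / ((1 - \<rho>) * sA2 + scov2)))) \<le> Pt \<and>
     \<alpha> * \<zeta> * h * P + (1 - \<alpha>) * \<rho> * \<zeta> * h * P - (1 - \<alpha>) * PS \<ge> Qreq"

text \<open>Feasible set of (P2): integrated receiver.
  Parameters: h P zeta srec (sigma_rec) Pt Qreq PI.\<close>
definition feas2 :: "real \<Rightarrow> real \<Rightarrow> real \<Rightarrow> real \<Rightarrow> real \<Rightarrow> real \<Rightarrow> real
    \<Rightarrow> real \<Rightarrow> nat \<Rightarrow> bool" where
  "feas2 h P \<zeta> srec Pt Qreq PI \<alpha> M \<longleftrightarrow>
     \<alpha> \<in> {0..1} \<and> M \<in> Mset \<and>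
     2 * (real M - 1) / real M * Qfun (1 / (real M - 1) * (h * P / srec)) \<le> Pt \<and>
     \<zeta> * h * P - (1 - \<alpha>) * PI \<ge> Qreq"

end

theory Submission
  imports Defs
begin

(* Take an optimal solution (\<alpha>1, \<rho>1, M1) of (P1) and an optimal
   solution (\<alpha>2, M2) of (P2).  Because the decoding circuit of the integrated
   receiver consumes less power (PI \<le> PS) and power splitting can only lose
   harvested energy (\<rho>1 \<le> 1), the decoder-off fraction \<alpha>1 already satisfies the
   energy constraint of (P2).  The SER constraint of (P2) involves M only, so
   (\<alpha>1, M2) is feasible for (P2).  Since the rate (1 - \<alpha>) log2 M strictly
   decreases in \<alpha> for fixed M \<ge> 2, optimality of \<alpha>2 with order M2 forces
   \<alpha>2 \<le> \<alpha>1.  Finally the rate is antitone in \<alpha> and monotone in M, which gives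
   R1 \<le> R2 whenever M1 \<le> M2. *)

lemma Mset_ge2: "M \<in> Mset \<Longrightarrow> real M \<ge> 2"
proof -
  assume "M \<in> Mset"
  then obtain l where l: "M = 2 ^ l" "l \<ge> 1" by (auto simp: Mset_def)
  have "(2::nat) ^ 1 \<le> 2 ^ l" using l(2) by (intro power_increasing) auto
  then show ?thesis using l(1) by (metis of_nat_le_iff of_nat_numeral power_one_right)
qed

lemma log2_Mset_pos: "M \<in> Mset \<Longrightarrow> log 2 (real M) > 0"
  using Mset_ge2 by fastforce

lemma energy_transfer:
  fixes \<alpha> \<rho> E PS PI Q :: real
  assumes "0 \<le> \<alpha>" "\<alpha> \<le> 1" "\<rho> \<le> 1" "E \<ge> 0" "PI \<le> PS"
    and harvest: "\<alpha> * E + (1 - \<alpha>) * \<rho> * E - (1 - \<alpha>) * PS \<ge> Q"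
  shows "E - (1 - \<alpha>) * PI \<ge> Q"
proof -
  have "(1 - \<alpha>) * \<rho> * E \<le> (1 - \<alpha>) * E"
    using assms by (intro mult_right_mono mult_left_mono[of \<rho> 1, simplified]) auto
  moreover have "(1 - \<alpha>) * PI \<le> (1 - \<alpha>) * PS"
    using assms by (intro mult_left_mono) auto
  ultimately show ?thesis using harvest by (simp add: algebra_simps)
qed

text \<open>The SER
  constraint of (P2) depends on the modulation order alone.\<close>

lemma feas1_feas2_transfer:
  assumes "h > 0" "P > 0" "\<zeta> > 0" "PI \<le> PS"
    and f1: "feas1 h P \<zeta> sA2 scov2 Pt Qreq PS \<alpha> \<rho> M"
    and f2: "feas2 h P \<zeta> srec Pt Qreq PI \<alpha>' M'"
  shows "feas2 h P \<zeta> srec Pt Qreq PI \<alpha> M'"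
proof -
  have "\<alpha> * (\<zeta> * h * P) + (1 - \<alpha>) * \<rho> * (\<zeta> * h * P) - (1 - \<alpha>) * PS \<ge> Qreq"
    using f1 by (simp add: feas1_def mult.assoc)
  then have "\<zeta> * h * P - (1 - \<alpha>) * PI \<ge> Qreq"
    using f1 assms by (intro energy_transfer[of \<alpha> \<rho> "\<zeta> * h * P" PI PS]) (auto simp: feas1_def)
  then show ?thesis using f1 f2 by (simp add: feas1_def feas2_def)
qed

lemma rate_le_iff:
  assumes "log 2 (real M) > 0"
  shows "rate \<alpha> M \<le> rate \<beta> M \<longleftrightarrow> \<beta> \<le> \<alpha>"
  using assms by (simp add: rate_def mult_le_cancel_right)

lemma rate_mono:
  assumes "\<beta> \<le> \<alpha>" "\<alpha> \<le> 1" "M \<le> M'" "real M \<ge> 1"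
  shows "rate \<alpha> M \<le> rate \<beta> M'"
proof -
  have "rate \<alpha> M \<le> (1 - \<beta>) * log 2 (real M)"
    using assms by (simp add: rate_def mult_right_mono)
  also have "\<dots> \<le> rate \<beta> M'"
    using assms by (simp add: rate_def mult_left_mono)
  finally show ?thesis .
qed

theorem proposition3:
  fixes h P \<zeta> sA2 scov2 srec Pt Qreq PS PI \<alpha>1 \<rho>1 \<alpha>2 R1 R2 :: real
    and M1 M2 :: nat
  assumes "h > 0" and "P > 0" and "0 < \<zeta>" and "\<zeta> \<le> 1"
    and "sA2 \<ge> 0" and "scov2 > 0" and "srec > 0" and "Pt > 0"
    and "0 \<le> Qreq" and "Qreq \<le> \<zeta> * h * P"
    and "PS \<ge> PI" and "PI > 0"
    and opt1: "feas1 h P \<zeta> sA2 scov2 Pt Qreq PS \<alpha>1 \<rho>1 M1"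
    and max1: "\<forall>\<alpha> \<rho> M. feas1 h P \<zeta> sA2 scov2 Pt Qreq PS \<alpha> \<rho> M \<longrightarrow> rate \<alpha> M \<le> rate \<alpha>1 M1"
    and opt2: "feas2 h P \<zeta> srec Pt Qreq PI \<alpha>2 M2"
    and max2: "\<forall>\<alpha> M. feas2 h P \<zeta> srec Pt Qreq PI \<alpha> M \<longrightarrow> rate \<alpha> M \<le> rate \<alpha>2 M2"
    and R1: "R1 = rate \<alpha>1 M1" and R2: "R2 = rate \<alpha>2 M2"
  shows "\<alpha>1 \<ge> \<alpha>2 \<and> (M1 \<le> M2 \<longrightarrow> R1 \<le> R2)"
proof -
  have "feas2 h P \<zeta> srec Pt Qreq PI \<alpha>1 M2"
    using feas1_feas2_transfer assms opt1 opt2 by blast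
  then have "rate \<alpha>1 M2 \<le> rate \<alpha>2 M2" using max2 by blast
  moreover have "log 2 (real M2) > 0" using opt2 log2_Mset_pos by (simp add: feas2_def)
  ultimately have alpha: "\<alpha>2 \<le> \<alpha>1" using rate_le_iff by blast
  have "M1 \<le> M2 \<longrightarrow> R1 \<le> R2"
  proof
    assume "M1 \<le> M2"
    moreover have "\<alpha>1 \<le> 1" and "real M1 \<ge> 1"
      using opt1 Mset_ge2[of M1] by (auto simp: feas1_def)
    ultimately show "R1 \<le> R2" using alpha R1 R2 rate_mono by blast
  qed
  with alpha show ?thesis by blast
qed

end
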